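(* (i) There exists $c_1>0$ such that $G(\beta,\gamma)\le \frac{c_1}{\beta^3}-F$ for all $\beta>0$ and $\gamma\ge0$. (ii) $G(\beta,\gamma)=-F$ for all $\beta>0$ and $\gamma\ge V_1$, where $V_1=\sup_{x\in\Omega}\left\{-\frac{\partial h_0}{\partial x_1}(x)\right\}$.
   Context: Let $\Omega\subset\mathbb{R}^2$ be a bounded open set with regular boundary and $0\in\Omega$. Let $h_0\in C^1(\bar\Omega)$ with $h_0\ge 0$ and $\min_{\Omega}h_0=h_0(0)=0$. Let $F>0$, $K=\{\varphi\in H^1_0(\Omega):\varphi\ge 0\}$. For $\beta>0$, $\gamma\in\mathbb{R}$, let $q\in K$ be the unique solution of $\int_\Omega (h_0+\beta)^3\nabla q\cdot\nabla(\varphi-q)\ge \int_\Omega h_0\,\partial_{x_1}(\varphi-q)-\gamma\int_\Omega(\varphi-q)$ for all $\varphi\in K$, and set $G(\beta,\gamma)=\int_\Omega q\,dx-F$. *)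

theory Defs
  imports "HOL-Analysis.Analysis"
begin

type_synonym pt = "real ^ 2"

definition rot2 :: "real \<Rightarrow> pt \<Rightarrow> pt" where
  "rot2 \<theta> y = vector [cos \<theta> * y$1 + sin \<theta> * y$2, - sin \<theta> * y$1 + cos \<theta> * y$2]"

definition regular_boundary :: "pt set \<Rightarrow> bool" where
  "regular_boundary \<Omega> \<longleftrightarrow>
     (\<forall>p\<in>frontier \<Omega>. \<exists>r>0. \<exists>\<theta> (g::real\<Rightarrow>real). g C1_differentiable_on UNIV \<and>
        \<Omega> \<inter> ball p r = {x\<in>ball p r. (rot2 \<theta> (x - p))$2 > g ((rot2 \<theta> (x - p))$1)})"

definition pderiv :: "2 \<Rightarrow> (pt \<Rightarrow> real) \<Rightarrow> pt \<Rightarrow> real" where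
  "pderiv i f x = frechet_derivative f (at x) (axis i 1)"

definition cgrad :: "(pt \<Rightarrow> real) \<Rightarrow> pt \<Rightarrow> pt" where
  "cgrad f x = (\<chi> i. frechet_derivative f (at x) (axis i 1))"

definition C1_closure :: "pt set \<Rightarrow> (pt \<Rightarrow> real) \<Rightarrow> bool" where
  "C1_closure \<Omega> h \<longleftrightarrow> continuous_on (closure \<Omega>) h \<and>
     (\<exists>D::pt \<Rightarrow> pt. continuous_on (closure \<Omega>) D \<and>
        (\<forall>x\<in>\<Omega>. (h has_derivative (\<lambda>v. D x \<bullet> v)) (at x)))"

definition test_fun :: "pt set \<Rightarrow> (pt \<Rightarrow> real) \<Rightarrow> bool" where
  "test_fun \<Omega> \<phi> \<longleftrightarrow> \<phi> differentiable_on UNIV \<and>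
     (\<forall>i. continuous_on UNIV (\<lambda>x. frechet_derivative \<phi> (at x) (axis i 1))) \<and>
     compact (closure {x. \<phi> x \<noteq> 0}) \<and> closure {x. \<phi> x \<noteq> 0} \<subseteq> \<Omega>"

definition L2 :: "pt set \<Rightarrow> (pt \<Rightarrow> real) \<Rightarrow> bool" where
  "L2 \<Omega> f \<longleftrightarrow> f \<in> borel_measurable (lebesgue_on \<Omega>) \<and>
     integrable (lebesgue_on \<Omega>) (\<lambda>x. (f x)^2)"

definition H1 :: "pt set \<Rightarrow> (pt \<Rightarrow> real) \<Rightarrow> (pt \<Rightarrow> pt) \<Rightarrow> bool" where
  "H1 \<Omega> u Du \<longleftrightarrow> L2 \<Omega> u \<and> (\<forall>i. L2 \<Omega> (\<lambda>x. Du x $ i)) \<and>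
     (\<forall>\<phi>. test_fun \<Omega> \<phi> \<longrightarrow> (\<forall>i.
        (\<integral>x. u x * cgrad \<phi> x $ i \<partial>lebesgue_on \<Omega>) = - (\<integral>x. Du x $ i * \<phi> x \<partial>lebesgue_on \<Omega>)))"

definition H10 :: "pt set \<Rightarrow> (pt \<Rightarrow> real) \<Rightarrow> (pt \<Rightarrow> pt) \<Rightarrow> bool" where
  "H10 \<Omega> u Du \<longleftrightarrow> H1 \<Omega> u Du \<and>
     (\<exists>s. (\<forall>n. test_fun \<Omega> (s n)) \<and>
        (\<lambda>n. \<integral>x. (s n x - u x)^2 \<partial>lebesgue_on \<Omega>) \<longlonglongrightarrow> 0 \<and>
        (\<forall>i. (\<lambda>n. \<integral>x. (cgrad (s n) x $ i - Du x $ i)^2 \<partial>lebesgue_on \<Omega>) \<longlonglongrightarrow> 0))"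

definition inK :: "pt set \<Rightarrow> (pt \<Rightarrow> real) \<Rightarrow> (pt \<Rightarrow> pt) \<Rightarrow> bool" where
  "inK \<Omega> u Du \<longleftrightarrow> H10 \<Omega> u Du \<and> (AE x in lebesgue_on \<Omega>. u x \<ge> 0)"

definition solves_VI :: "pt set \<Rightarrow> (pt \<Rightarrow> real) \<Rightarrow> real \<Rightarrow> real \<Rightarrow> (pt \<Rightarrow> real) \<Rightarrow> (pt \<Rightarrow> pt) \<Rightarrow> bool" where
  "solves_VI \<Omega> h0 \<beta> \<gamma> q Dq \<longleftrightarrow> inK \<Omega> q Dq \<and>
     (\<forall>\<phi> D\<phi>. inK \<Omega> \<phi> D\<phi> \<longrightarrow>
        (\<integral>x. (h0 x + \<beta>)^3 * (Dq x \<bullet> (D\<phi> x - Dq x)) \<partial>lebesgue_on \<Omega>)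
        \<ge> (\<integral>x. h0 x * (D\<phi> x $ 1 - Dq x $ 1) \<partial>lebesgue_on \<Omega>)
           - \<gamma> * (\<integral>x. \<phi> x - q x \<partial>lebesgue_on \<Omega>))"

text \<open>G(beta,gamma) = int q - F, for the solution q.\<close>
definition Gfun :: "pt set \<Rightarrow> real \<Rightarrow> (pt \<Rightarrow> real) \<Rightarrow> real" where
  "Gfun \<Omega> F q = (\<integral>x. q x \<partial>lebesgue_on \<Omega>) - F"

end

theory Submission
  imports Defs
begin

(* Testing the variational inequality with \<phi> = 0 gives the energy bound
   \<beta>^3 \<integral>(\<partial>\<^sub>1q)^2 + \<gamma> \<integral>q \<le> \<integral>h0 \<partial>\<^sub>1q.
   For \<gamma> \<ge> 0 the right-hand side is at most (max h0) \<integral>|\<partial>\<^sub>1q|, and Cauchy-Schwarz turns this into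
   \<integral>|\<partial>\<^sub>1q| \<le> |\<Omega>| (max h0) / \<beta>^3; since q vanishes on the boundary, \<integral>q = - \<integral>x\<^sub>1 \<partial>\<^sub>1q is at most
   the width of \<Omega> times \<integral>|\<partial>\<^sub>1q|.  If \<gamma> \<ge> sup (- \<partial>\<^sub>1h0), integrating \<integral>h0 \<partial>\<^sub>1q by parts makes the
   energy bound read \<beta>^3 \<integral>(\<partial>\<^sub>1q)^2 \<le> - \<integral>(\<gamma> + \<partial>\<^sub>1h0) q \<le> 0, so \<partial>\<^sub>1q = 0 and \<integral>q = 0.
   Both integrations by parts hold for test functions by the fundamental theorem of calculus and pass
   to H^1_0 by L^2 approximation. *)

section \<open>Integrals of directional derivatives\<close>

lemma integral_lborel_translate:
  fixes f :: "'a::euclidean_space \<Rightarrow> real"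
  assumes "f \<in> borel_measurable borel"
  shows "(\<integral>x. f (c + x) \<partial>lborel) = (\<integral>x. f x \<partial>lborel)"
  using integral_distr[of "(+) c" lborel borel f] assms lborel_distr_plus[of c] by simp

lemma integrable_lborel_translate:
  fixes f :: "'a::euclidean_space \<Rightarrow> real"
  assumes "f \<in> borel_measurable borel" "integrable lborel f"
  shows "integrable lborel (\<lambda>x. f (c + x))"
  using integrable_distr_eq[of "(+) c" lborel borel f] assms lborel_distr_plus[of c] by simp

lemma compact_support_boundedE:
  fixes f :: "'a::metric_space \<Rightarrow> real"
  assumes "continuous_on UNIV f" "compact K" "\<And>x. x \<notin> K \<Longrightarrow> f x = 0"
  obtains B where "\<And>x. \<bar>f x\<bar> \<le> B"
proof -
  have "compact (f ` K)"
    using assms continuous_on_subset compact_continuous_image by blast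
  then obtain B where B: "\<forall>y\<in>f ` K. norm y \<le> B" "B > 0"
    using compact_imp_bounded bounded_pos by metis
  have "\<bar>f x\<bar> \<le> B" for x
    using B assms(3)[of x] by (cases "x \<in> K") auto
  then show thesis by (rule that)
qed

lemma integrable_lborel_compact_support:
  fixes f :: "'a::euclidean_space \<Rightarrow> real"
  assumes "continuous_on UNIV f" "compact K" "\<And>x. x \<notin> K \<Longrightarrow> f x = 0"
  shows "integrable lborel f"
proof -
  have "integrable lborel (\<lambda>x. indicat_real K x *\<^sub>R f x)"
    using assms by (intro borel_integrable_compact) (auto intro: continuous_on_subset)
  also have "(\<lambda>x. indicat_real K x *\<^sub>R f x) = f"
    using assms(3) by (force simp: indicator_def)
  finally show ?thesis .
qed

lemma difference_quotient_bound:
  fixes f g :: "'a::real_normed_vector \<Rightarrow> real"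
  assumes deriv: "\<And>x. ((\<lambda>t. f (x + t *\<^sub>R e)) has_real_derivative g x) (at 0)"
    and B: "\<And>x. \<bar>g x\<bar> \<le> B" and "0 < t"
  shows "\<bar>(f (x + t *\<^sub>R e) - f x) / t\<bar> \<le> B"
proof -
  have "((\<lambda>s. f (x + s *\<^sub>R e)) has_real_derivative g (x + s *\<^sub>R e)) (at s)" for s
    using DERIV_shift[of "\<lambda>s. f (x + s *\<^sub>R e)" "g (x + s *\<^sub>R e)" 0 s]
      deriv[of "x + s *\<^sub>R e"] by (simp add: algebra_simps scaleR_add_left)
  then obtain z where "f (x + t *\<^sub>R e) - f (x + 0 *\<^sub>R e) = (t - 0) * g (x + z *\<^sub>R e)"
    using MVT2[of 0 t "\<lambda>s. f (x + s *\<^sub>R e)" "\<lambda>s. g (x + s *\<^sub>R e)"] \<open>0 < t\<close> by blast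
  then show ?thesis
    using B[of "x + z *\<^sub>R e"] \<open>0 < t\<close> by simp
qed

text \<open>The difference quotients along e have integral zero by translation invariance, converge
  pointwise to g and, by the mean value theorem, are dominated by a multiple of the indicator of a
  ball; dominated convergence does the rest.\<close>
lemma integral_directional_derivative_eq_0:
  fixes f g :: "'a::euclidean_space \<Rightarrow> real"
  assumes K: "compact K" and cf: "continuous_on UNIV f" and cg: "continuous_on UNIV g"
    and f0: "\<And>x. x \<notin> K \<Longrightarrow> f x = 0" and g0: "\<And>x. x \<notin> K \<Longrightarrow> g x = 0"
    and deriv: "\<And>x. ((\<lambda>t. f (x + t *\<^sub>R e)) has_real_derivative g x) (at 0)"
  shows "(\<integral>x. g x \<partial>lborel) = 0"
proof -
  obtain r where r: "\<And>x. x \<in> K \<Longrightarrow> norm x \<le> r"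
    using K compact_imp_bounded bounded_iff by metis
  obtain B where B: "\<And>x. \<bar>g x\<bar> \<le> B"
    using compact_support_boundedE[OF cg K g0] by blast
  define C where "C = cball (0::'a) (r + norm e)"
  define t :: "nat \<Rightarrow> real" where "t n = inverse (real (Suc n))" for n
  define D where "D n x = (f (x + t n *\<^sub>R e) - f x) / t n" for n x
  have t: "0 < t n" "t n \<le> 1" for n
    by (auto simp: t_def field_simps)
  have fm: "f \<in> borel_measurable borel" and gm: "g \<in> borel_measurable borel"
    using cf cg by (simp_all add: borel_measurable_continuous_onI)
  have fi: "integrable lborel f"
    by (rule integrable_lborel_compact_support[OF cf K f0])
  have "(\<integral>x. D n x \<partial>lborel) = 0" for n
    using integral_lborel_translate[OF fm, of "t n *\<^sub>R e"]
      integrable_lborel_translate[OF fm fi, of "t n *\<^sub>R e"] fi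
    by (simp add: D_def add.commute Bochner_Integration.integral_diff)
  moreover have "(\<lambda>n. \<integral>x. D n x \<partial>lborel) \<longlonglongrightarrow> (\<integral>x. g x \<partial>lborel)"
  proof (rule integral_dominated_convergence[where w = "\<lambda>x. B * indicator C x"])
    show "integrable lborel (\<lambda>x. B * indicat_real C x)"
      unfolding C_def by (intro integrable_mult_right integrable_real_indicator
          emeasure_bounded_finite) auto
    have "filterlim t (at 0) sequentially"
      using LIMSEQ_inverse_real_of_nat t(1) unfolding t_def
      by (intro filterlim_atI) (auto intro!: always_eventually)
    moreover have "((\<lambda>h. (f (x + h *\<^sub>R e) - f x) / h) \<longlongrightarrow> g x) (at 0)" for x
      using deriv[of x] unfolding DERIV_def by simp
    ultimately show "AE x in lborel. (\<lambda>n. D n x) \<longlonglongrightarrow> g x"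
      unfolding D_def by (intro AE_I2) (rule filterlim_compose[rotated])
    show "AE x in lborel. norm (D n x) \<le> B * indicator C x" for n
    proof (rule AE_I2)
      fix x
      show "norm (D n x) \<le> B * indicator C x"
      proof (cases "x \<in> C")
        case True
        then show ?thesis
          using difference_quotient_bound[OF deriv B t(1)] by (simp add: D_def)
      next
        case False
        then have x: "norm x > r + norm e"
          unfolding C_def by auto
        moreover have "norm (t n *\<^sub>R e) \<le> norm e"
          using t[of n] by (simp add: mult_left_le_one_le)
        ultimately have "norm (x + t n *\<^sub>R e) > r"
          using norm_triangle_ineq2[of x "- (t n *\<^sub>R e)"] by simp
        then have "x \<notin> K" "x + t n *\<^sub>R e \<notin> K"
          using x r by (smt (verit) norm_ge_zero)+
        then show ?thesis
          using False f0 by (simp add: D_def)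
      qed
    qed
    show "\<And>n. D n \<in> borel_measurable lborel"
      using fm unfolding D_def by measurable
  qed (simp add: gm)
  ultimately show ?thesis
    by (simp add: LIMSEQ_const_iff)
qed

section \<open>Square-integrable functions on a finite measure space\<close>

lemma integrable_bounded_mult:
  fixes f g :: "'a \<Rightarrow> real"
  assumes "integrable M f" "g \<in> borel_measurable M" "\<And>x. x \<in> space M \<Longrightarrow> \<bar>g x\<bar> \<le> B"
  shows "integrable M (\<lambda>x. g x * f x)"
proof (rule Bochner_Integration.integrable_bound[where f = "\<lambda>x. B * f x"])
  show "integrable M (\<lambda>x. B * f x)"
    using assms(1) by simp
  show "(\<lambda>x. g x * f x) \<in> borel_measurable M"
    using assms(1,2) borel_measurable_integrable by measurable
  show "AE x in M. norm (g x * f x) \<le> norm (B * f x)"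
    using assms(3) by (intro AE_I2) (force simp: abs_mult intro: mult_right_mono)
qed

lemma integrable_lebesgue_on_bounded_continuous:
  fixes f :: "'a::euclidean_space \<Rightarrow> real"
  assumes "S \<in> lmeasurable" "continuous_on S f" "\<And>x. x \<in> S \<Longrightarrow> \<bar>f x\<bar> \<le> B"
  shows "integrable (lebesgue_on S) f"
  using assms by (intro finite_measure.integrable_const_bound[OF finite_measure_lebesgue_on, where B = B])
    (auto intro!: AE_I2 continuous_imp_measurable_on_sets_lebesgue)

context finite_measure
begin

lemma integral_abs_squared_le:
  fixes f :: "'a \<Rightarrow> real"
  assumes "f \<in> borel_measurable M" "integrable M (\<lambda>x. (f x)\<^sup>2)"
  shows "(\<integral>x. \<bar>f x\<bar> \<partial>M)\<^sup>2 \<le> measure M (space M) * (\<integral>x. (f x)\<^sup>2 \<partial>M)"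
proof -
  define A where "A = (\<integral>x. \<bar>f x\<bar> \<partial>M)"
  define Q where "Q = (\<integral>x. (f x)\<^sup>2 \<partial>M)"
  define \<mu> where "\<mu> = measure M (space M)"
  have "integrable M f"
    using assms by (rule square_integrable_imp_integrable)
  then have quadratic: "0 \<le> Q - 2 * m * A + m\<^sup>2 * \<mu>" for m
  proof -
    have "0 \<le> (\<integral>x. (\<bar>f x\<bar> - m)\<^sup>2 \<partial>M)"
      by simp
    also have "(\<lambda>x. (\<bar>f x\<bar> - m)\<^sup>2) = (\<lambda>x. ((f x)\<^sup>2 - (2 * m) * \<bar>f x\<bar>) + m\<^sup>2)"
      by (auto simp: power2_eq_square algebra_simps)
    also have "(\<integral>x. ((f x)\<^sup>2 - (2 * m) * \<bar>f x\<bar>) + m\<^sup>2 \<partial>M) = Q - 2 * m * A + m\<^sup>2 * \<mu>"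
      using assms(2) \<open>integrable M f\<close> unfolding Q_def A_def \<mu>_def
      by (simp add: Bochner_Integration.integral_add Bochner_Integration.integral_diff
          Bochner_Integration.integrable_diff emeasure_eq_measure)
    finally show ?thesis .
  qed
  show ?thesis
  proof (cases "\<mu> > 0")
    case True
    have "0 \<le> Q - 2 * (A / \<mu>) * A + (A / \<mu>)\<^sup>2 * \<mu>"
      by (rule quadratic)
    with True show ?thesis
      unfolding A_def Q_def \<mu>_def by (simp add: power2_eq_square field_simps)
  next
    case False
    then have "\<mu> = 0"
      unfolding \<mu>_def using measure_nonneg by (metis order.not_eq_order_implies_strict)
    have "A \<le> 0"
    proof (rule ccontr)
      assume "\<not> A \<le> 0"
      then have "0 \<le> Q - 2 * ((Q + 1) / (2 * A)) * A + ((Q + 1) / (2 * A))\<^sup>2 * \<mu>"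
        by (intro quadratic)
      with \<open>\<not> A \<le> 0\<close> \<open>\<mu> = 0\<close> show False
        by simp
    qed
    moreover have "0 \<le> A"
      unfolding A_def by simp
    ultimately show ?thesis
      using \<open>\<mu> = 0\<close> unfolding A_def \<mu>_def by simp
  qed
qed

lemma integrable_square_diff:
  fixes f g :: "'a \<Rightarrow> real"
  assumes "f \<in> borel_measurable M" "integrable M (\<lambda>x. (f x)\<^sup>2)"
    and "g \<in> borel_measurable M" "integrable M (\<lambda>x. (g x)\<^sup>2)"
  shows "integrable M (\<lambda>x. (f x - g x)\<^sup>2)"
proof (rule Bochner_Integration.integrable_bound[where f = "\<lambda>x. 2 * (f x)\<^sup>2 + 2 * (g x)\<^sup>2"])
  show "integrable M (\<lambda>x. 2 * (f x)\<^sup>2 + 2 * (g x)\<^sup>2)"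
    using assms by auto
  show "AE x in M. norm ((f x - g x)\<^sup>2) \<le> norm (2 * (f x)\<^sup>2 + 2 * (g x)\<^sup>2)"
  proof (rule AE_I2)
    fix x
    have "(f x - g x)\<^sup>2 \<le> 2 * (f x)\<^sup>2 + 2 * (g x)\<^sup>2"
      using zero_le_power2[of "f x + g x"] unfolding power2_diff power2_sum by linarith
    then show "norm ((f x - g x)\<^sup>2) \<le> norm (2 * (f x)\<^sup>2 + 2 * (g x)\<^sup>2)"
      by simp
  qed
qed (use assms in measurable)

lemma abs_integral_bounded_mult_le:
  fixes g d :: "'a \<Rightarrow> real"
  assumes g: "g \<in> borel_measurable M" "\<And>x. x \<in> space M \<Longrightarrow> \<bar>g x\<bar> \<le> B"
    and d: "d \<in> borel_measurable M" "integrable M (\<lambda>x. (d x)\<^sup>2)"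
  shows "\<bar>\<integral>x. g x * d x \<partial>M\<bar> \<le> \<bar>B\<bar> * sqrt (measure M (space M) * (\<integral>x. (d x)\<^sup>2 \<partial>M))"
proof -
  have di: "integrable M d"
    using d by (rule square_integrable_imp_integrable)
  have "\<bar>\<integral>x. g x * d x \<partial>M\<bar> \<le> (\<integral>x. \<bar>g x * d x\<bar> \<partial>M)"
    by (rule integral_abs_bound)
  also have "\<dots> \<le> (\<integral>x. \<bar>B\<bar> * \<bar>d x\<bar> \<partial>M)"
  proof (rule integral_mono)
    show "integrable M (\<lambda>x. \<bar>g x * d x\<bar>)"
      using integrable_bounded_mult[OF di g] by simp
    show "integrable M (\<lambda>x. \<bar>B\<bar> * \<bar>d x\<bar>)"
      using di by simp
    show "\<bar>g x * d x\<bar> \<le> \<bar>B\<bar> * \<bar>d x\<bar>" if "x \<in> space M" for x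
      using g(2)[OF that] by (simp add: abs_mult mult_right_mono)
  qed
  also have "\<dots> = \<bar>B\<bar> * (\<integral>x. \<bar>d x\<bar> \<partial>M)"
    by simp
  also have "\<dots> \<le> \<bar>B\<bar> * sqrt (measure M (space M) * (\<integral>x. (d x)\<^sup>2 \<partial>M))"
    using integral_abs_squared_le[OF d] by (intro mult_left_mono) (simp_all add: real_le_rsqrt)
  finally show ?thesis .
qed

lemma tendsto_integral_bounded_mult:
  fixes g a :: "'a \<Rightarrow> real" and an :: "nat \<Rightarrow> 'a \<Rightarrow> real"
  assumes g: "g \<in> borel_measurable M" "\<And>x. x \<in> space M \<Longrightarrow> \<bar>g x\<bar> \<le> B"
    and a: "a \<in> borel_measurable M" "integrable M (\<lambda>x. (a x)\<^sup>2)"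
    and an: "\<And>n. an n \<in> borel_measurable M" "\<And>n. integrable M (\<lambda>x. (an n x)\<^sup>2)"
    and lim: "(\<lambda>n. \<integral>x. (an n x - a x)\<^sup>2 \<partial>M) \<longlonglongrightarrow> 0"
  shows "(\<lambda>n. \<integral>x. g x * an n x \<partial>M) \<longlonglongrightarrow> (\<integral>x. g x * a x \<partial>M)"
proof -
  define \<mu> where "\<mu> = measure M (space M)"
  have "integrable M a" "integrable M (an n)" for n
    using a an by (auto intro: square_integrable_imp_integrable)
  then have "(\<integral>x. g x * an n x \<partial>M) - (\<integral>x. g x * a x \<partial>M) = (\<integral>x. g x * (an n x - a x) \<partial>M)" for n
    using integrable_bounded_mult[OF _ g] by (simp add: right_diff_distrib)
  moreover have "\<bar>\<integral>x. g x * (an n x - a x) \<partial>M\<bar> \<le> \<bar>B\<bar> * sqrt (\<mu> * (\<integral>x. (an n x - a x)\<^sup>2 \<partial>M))" for n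
    unfolding \<mu>_def using a an
    by (intro abs_integral_bounded_mult_le[OF g] integrable_square_diff) auto
  moreover have "(\<lambda>n. \<bar>B\<bar> * sqrt (\<mu> * (\<integral>x. (an n x - a x)\<^sup>2 \<partial>M))) \<longlonglongrightarrow> \<bar>B\<bar> * sqrt (\<mu> * 0)"
    using lim by (intro tendsto_intros)
  ultimately have "(\<lambda>n. (\<integral>x. g x * an n x \<partial>M) - (\<integral>x. g x * a x \<partial>M)) \<longlonglongrightarrow> 0"
    by (simp add: Lim_null_comparison[rotated])
  then show ?thesis
    by (simp add: LIM_zero_iff)
qed

end

section \<open>Integration by parts for test functions and for H^1_0\<close>

lemma has_derivative_imp_directional:
  fixes F :: "'a::real_normed_vector \<Rightarrow> real"
  assumes "(F has_derivative F') (at x)"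
  shows "((\<lambda>t. F (x + t *\<^sub>R e)) has_real_derivative F' e) (at 0)"
proof -
  have "((\<lambda>t::real. x + t *\<^sub>R e) has_derivative (\<lambda>t. t *\<^sub>R e)) (at 0)"
    by (auto intro!: derivative_eq_intros)
  then have "((\<lambda>t. F (x + t *\<^sub>R e)) has_derivative (\<lambda>t. F' (t *\<^sub>R e))) (at 0)"
    using assms by (auto intro: has_derivative_compose)
  moreover have "(\<lambda>t. F' (t *\<^sub>R e)) = (*) (F' e)"
    using has_derivative_linear[OF assms] by (auto simp: linear_scale fun_eq_iff)
  ultimately show ?thesis
    by (simp add: has_field_derivative_def)
qed

lemma continuous_on_extend_by_zero:
  fixes F :: "'a::topological_space \<Rightarrow> 'b::real_normed_vector"
  assumes "open \<Omega>" "closed S" "S \<subseteq> \<Omega>" "continuous_on \<Omega> F" "\<And>x. x \<in> \<Omega> - S \<Longrightarrow> F x = 0"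
  shows "continuous_on UNIV (\<lambda>x. if x \<in> \<Omega> then F x else 0)"
proof -
  have "continuous_on (\<Omega> \<union> - S) (\<lambda>x. if x \<in> \<Omega> then F x else 0)"
  proof (rule continuous_on_open_Un)
    show "continuous_on \<Omega> (\<lambda>x. if x \<in> \<Omega> then F x else 0)"
      using assms(4) by (rule continuous_on_eq) auto
    show "continuous_on (- S) (\<lambda>x. if x \<in> \<Omega> then F x else 0)"
      using assms(5) by (intro continuous_on_eq[OF continuous_on_const]) auto
  qed (use assms in auto)
  moreover have "\<Omega> \<union> - S = UNIV"
    using assms(3) by auto
  ultimately show ?thesis
    by simp
qed

lemma test_fun_has_derivative:
  "test_fun \<Omega> s \<Longrightarrow> (s has_derivative frechet_derivative s (at x)) (at x)"
  unfolding test_fun_def differentiable_on_def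
  by (metis UNIV_I at_within_open open_UNIV frechet_derivative_works)

lemma test_fun_directional_derivative:
  "test_fun \<Omega> s \<Longrightarrow> ((\<lambda>t. s (x + t *\<^sub>R axis i 1)) has_real_derivative cgrad s x $ i) (at 0)"
  using has_derivative_imp_directional[OF test_fun_has_derivative] by (simp add: cgrad_def)

lemma test_fun_continuous: "test_fun \<Omega> s \<Longrightarrow> continuous_on UNIV s"
  unfolding test_fun_def by (rule differentiable_imp_continuous_on) blast

lemma test_fun_cgrad_continuous: "test_fun \<Omega> s \<Longrightarrow> continuous_on UNIV (\<lambda>x. cgrad s x $ i)"
  unfolding test_fun_def cgrad_def by simp

lemma eq_0_outside_closure_support: "x \<notin> closure {x. s x \<noteq> 0} \<Longrightarrow> s x = 0"
  using closure_subset[of "{x. s x \<noteq> 0}"] by auto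

lemma cgrad_eq_0_outside_closure_support:
  assumes "x \<notin> closure {x. s x \<noteq> 0}"
  shows "cgrad s x $ i = 0"
proof -
  have "((\<lambda>x. 0) has_derivative (\<lambda>v. 0)) (at x)"
    by simp
  then have "(s has_derivative (\<lambda>v. 0)) (at x)"
    by (rule has_derivative_transform_within_open[where s = "- closure {x. s x \<noteq> 0}"])
      (use assms eq_0_outside_closure_support in auto)
  then show ?thesis
    by (simp add: cgrad_def frechet_derivative_at[symmetric])
qed

lemma test_fun_bounded:
  assumes "test_fun \<Omega> s"
  obtains B where "\<And>x. \<bar>s x\<bar> \<le> B" "\<And>x. \<bar>cgrad s x $ i\<bar> \<le> B"
proof -
  have K: "compact (closure {x. s x \<noteq> 0})"
    using assms unfolding test_fun_def by blast
  obtain B1 where B1: "\<And>x. \<bar>s x\<bar> \<le> B1"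
    using compact_support_boundedE[OF test_fun_continuous[OF assms] K
        eq_0_outside_closure_support[of _ s]] by blast
  obtain B2 where B2: "\<And>x. \<bar>cgrad s x $ i\<bar> \<le> B2"
    using compact_support_boundedE[OF test_fun_cgrad_continuous[OF assms] K
        cgrad_eq_0_outside_closure_support[of _ s]] by blast
  show thesis
  proof (rule that[of "max B1 B2"])
    show "\<bar>s x\<bar> \<le> max B1 B2" for x
      using B1[of x] by (simp add: le_max_iff_disj)
    show "\<bar>cgrad s x $ i\<bar> \<le> max B1 B2" for x
      using B2[of x] by (simp add: le_max_iff_disj)
  qed
qed

lemma integral_lebesgue_on_directional_derivative_eq_0:
  fixes u v :: "'a::euclidean_space \<Rightarrow> real"
  assumes \<Omega>: "open \<Omega>" and S: "compact S" "S \<subseteq> \<Omega>"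
    and uv: "continuous_on \<Omega> u" "continuous_on \<Omega> v"
      "\<And>x. x \<in> \<Omega> - S \<Longrightarrow> u x = 0" "\<And>x. x \<in> \<Omega> - S \<Longrightarrow> v x = 0"
    and deriv: "\<And>x. x \<in> \<Omega> \<Longrightarrow> ((\<lambda>t. u (x + t *\<^sub>R e)) has_real_derivative v x) (at 0)"
  shows "(\<integral>x. v x \<partial>lebesgue_on \<Omega>) = 0"
proof -
  define f where "f x = (if x \<in> \<Omega> then u x else 0)" for x
  define g where "g x = (if x \<in> \<Omega> then v x else 0)" for x
  have f_cont: "continuous_on UNIV f" and g_cont: "continuous_on UNIV g"
    unfolding f_def g_def using \<Omega> compact_imp_closed[OF S(1)] S(2) uv
    by (auto intro!: continuous_on_extend_by_zero)
  have "((\<lambda>t. f (x + t *\<^sub>R e)) has_real_derivative g x) (at 0)" for x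
  proof (cases "x \<in> \<Omega>")
    case True
    then have "((\<lambda>t. u (x + t *\<^sub>R e)) has_real_derivative g x) (at 0)"
      using deriv by (simp add: g_def)
    then show ?thesis
      by (rule has_field_derivative_transform_within_open[where S = "(\<lambda>t. x + t *\<^sub>R e) -` \<Omega>"])
        (auto intro!: open_vimage \<Omega> continuous_intros simp: True f_def)
  next
    case False
    then have "((\<lambda>t. 0) has_real_derivative g x) (at 0)"
      by (simp add: g_def)
    then show ?thesis
      by (rule has_field_derivative_transform_within_open[where S = "(\<lambda>t. x + t *\<^sub>R e) -` (- S)"])
        (use False S uv compact_imp_closed in \<open>auto intro!: open_vimage continuous_intros simp: f_def\<close>)
  qed
  then have g0: "(\<integral>x. g x \<partial>lborel) = 0"
    by (rule integral_directional_derivative_eq_0[OF S(1) f_cont g_cont, rotated 2])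
      (use S(2) uv in \<open>auto simp: f_def g_def\<close>)
  have "\<Omega> \<in> sets lebesgue"
    using \<Omega> by (metis borel_open sets_completionI_sets sets_lborel)
  then have "(\<integral>x. v x \<partial>lebesgue_on \<Omega>) = (\<integral>x. indicat_real \<Omega> x *\<^sub>R v x \<partial>lebesgue)"
    by (simp add: integral_restrict_space)
  also have "(\<lambda>x. indicat_real \<Omega> x *\<^sub>R v x) = g"
    by (auto simp: g_def indicator_def)
  also have "(\<integral>x. g x \<partial>lebesgue) = (\<integral>x. g x \<partial>lborel)"
    using g_cont by (simp add: integral_completion borel_measurable_continuous_onI)
  finally show ?thesis
    using g0 by simp
qed

text \<open>The product w s vanishes near the boundary, so its directional derivative
  w \<partial>s + (Dw) s integrates to zero over \<Omega>.\<close>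
lemma test_fun_integration_by_parts:
  fixes w Dw :: "pt \<Rightarrow> real"
  assumes \<Omega>: "open \<Omega>" "bounded \<Omega>" and s: "test_fun \<Omega> s"
    and w: "continuous_on \<Omega> w" "continuous_on \<Omega> Dw"
      "\<And>x. x \<in> \<Omega> \<Longrightarrow> ((\<lambda>t. w (x + t *\<^sub>R axis i 1)) has_real_derivative Dw x) (at 0)"
      "\<And>x. x \<in> \<Omega> \<Longrightarrow> \<bar>w x\<bar> \<le> B" "\<And>x. x \<in> \<Omega> \<Longrightarrow> \<bar>Dw x\<bar> \<le> B"
  shows "(\<integral>x. w x * cgrad s x $ i \<partial>lebesgue_on \<Omega>) = - (\<integral>x. Dw x * s x \<partial>lebesgue_on \<Omega>)"
proof -
  define ds where "ds x = cgrad s x $ i" for x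
  have cs: "continuous_on \<Omega> s" "continuous_on \<Omega> ds"
    using test_fun_continuous[OF s] test_fun_cgrad_continuous[OF s] unfolding ds_def
    by (auto intro: continuous_on_subset)
  have "(\<integral>x. w x * ds x + Dw x * s x \<partial>lebesgue_on \<Omega>) = 0"
  proof (rule integral_lebesgue_on_directional_derivative_eq_0[OF \<Omega>(1), where S = "closure {x. s x \<noteq> 0}"])
    show "compact (closure {x. s x \<noteq> 0})" "closure {x. s x \<noteq> 0} \<subseteq> \<Omega>"
      using s unfolding test_fun_def by auto
    show "((\<lambda>t. w (x + t *\<^sub>R axis i 1) * s (x + t *\<^sub>R axis i 1)) has_real_derivative
        w x * ds x + Dw x * s x) (at 0)" if "x \<in> \<Omega>" for x
      using DERIV_mult[OF w(3)[OF that] test_fun_directional_derivative[OF s]]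
      by (simp add: ds_def algebra_simps)
    show "continuous_on \<Omega> (\<lambda>x. w x * s x)" "continuous_on \<Omega> (\<lambda>x. w x * ds x + Dw x * s x)"
      using w cs by (auto intro!: continuous_intros)
    show "w x * s x = 0" "w x * ds x + Dw x * s x = 0" if "x \<in> \<Omega> - closure {x. s x \<noteq> 0}" for x
      using that eq_0_outside_closure_support[of x s] cgrad_eq_0_outside_closure_support[of x s i]
      by (simp_all add: ds_def)
  qed
  moreover obtain Bs where Bs: "\<And>x. \<bar>s x\<bar> \<le> Bs" "\<And>x. \<bar>ds x\<bar> \<le> Bs"
    using test_fun_bounded[OF s] unfolding ds_def by blast
  have product_bound: "\<bar>u * v\<bar> \<le> B * Bs" if "\<bar>u\<bar> \<le> B" "\<bar>v\<bar> \<le> Bs" for u v :: real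
    unfolding abs_mult using that by (intro mult_mono) auto
  have "integrable (lebesgue_on \<Omega>) (\<lambda>x. w x * ds x)" "integrable (lebesgue_on \<Omega>) (\<lambda>x. Dw x * s x)"
    using w cs Bs lmeasurable_open[OF \<Omega>(2,1)]
    by (auto intro!: integrable_lebesgue_on_bounded_continuous[of _ _ "B * Bs"]
        continuous_intros product_bound)
  ultimately show ?thesis
    by (simp add: ds_def Bochner_Integration.integral_add)
qed

lemma finite_measure_lebesgue_on_bounded_open:
  "open \<Omega> \<Longrightarrow> bounded \<Omega> \<Longrightarrow> finite_measure (lebesgue_on \<Omega>)"
  by (intro finite_measure_lebesgue_on lmeasurable_open)

lemma test_fun_L2:
  assumes "open \<Omega>" "bounded \<Omega>" "test_fun \<Omega> s"
  shows "L2 \<Omega> s" "L2 \<Omega> (\<lambda>x. cgrad s x $ i)"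
proof -
  have \<Omega>: "\<Omega> \<in> lmeasurable"
    using assms(1,2) by (rule lmeasurable_open[rotated])
  obtain B where B: "\<And>x. \<bar>s x\<bar> \<le> B" "\<And>x. \<bar>cgrad s x $ i\<bar> \<le> B"
    using test_fun_bounded[OF assms(3)] by blast
  have "continuous_on \<Omega> s" "continuous_on \<Omega> (\<lambda>x. cgrad s x $ i)"
    using test_fun_continuous[OF assms(3)] test_fun_cgrad_continuous[OF assms(3)]
    by (auto intro: continuous_on_subset)
  moreover have "\<bar>u\<^sup>2\<bar> \<le> B\<^sup>2" if "\<bar>u\<bar> \<le> B" for u :: real
    using power_mono[OF that abs_ge_zero, of 2] by simp
  ultimately show "L2 \<Omega> s" "L2 \<Omega> (\<lambda>x. cgrad s x $ i)"
    unfolding L2_def using \<Omega> B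
    by (auto intro!: integrable_lebesgue_on_bounded_continuous[where B = "B\<^sup>2"] continuous_intros
        continuous_imp_measurable_on_sets_lebesgue)
qed

lemma H10_integration_by_parts:
  fixes w Dw :: "pt \<Rightarrow> real"
  assumes \<Omega>: "open \<Omega>" "bounded \<Omega>" and q: "H10 \<Omega> q Dq"
    and w: "continuous_on \<Omega> w" "continuous_on \<Omega> Dw"
      "\<And>x. x \<in> \<Omega> \<Longrightarrow> ((\<lambda>t. w (x + t *\<^sub>R axis i 1)) has_real_derivative Dw x) (at 0)"
      "\<And>x. x \<in> \<Omega> \<Longrightarrow> \<bar>w x\<bar> \<le> B" "\<And>x. x \<in> \<Omega> \<Longrightarrow> \<bar>Dw x\<bar> \<le> B"
  shows "(\<integral>x. w x * Dq x $ i \<partial>lebesgue_on \<Omega>) = - (\<integral>x. Dw x * q x \<partial>lebesgue_on \<Omega>)"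
proof -
  obtain s where s: "\<And>n. test_fun \<Omega> (s n)"
    "(\<lambda>n. \<integral>x. (s n x - q x)\<^sup>2 \<partial>lebesgue_on \<Omega>) \<longlonglongrightarrow> 0"
    "(\<lambda>n. \<integral>x. (cgrad (s n) x $ i - Dq x $ i)\<^sup>2 \<partial>lebesgue_on \<Omega>) \<longlonglongrightarrow> 0"
    using q unfolding H10_def by blast
  interpret finite_measure "lebesgue_on \<Omega>"
    using \<Omega> by (rule finite_measure_lebesgue_on_bounded_open)
  have "L2 \<Omega> q" "L2 \<Omega> (\<lambda>x. Dq x $ i)"
    using q unfolding H10_def H1_def by auto
  moreover have "L2 \<Omega> (s n)" "L2 \<Omega> (\<lambda>x. cgrad (s n) x $ i)" for n
    using test_fun_L2[OF \<Omega> s(1)] by auto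
  moreover have "w \<in> borel_measurable (lebesgue_on \<Omega>)" "Dw \<in> borel_measurable (lebesgue_on \<Omega>)"
    using w(1,2) \<Omega>(1) by (auto intro: continuous_imp_measurable_on_sets_lebesgue)
  ultimately have lim: "(\<lambda>n. \<integral>x. w x * cgrad (s n) x $ i \<partial>lebesgue_on \<Omega>)
        \<longlonglongrightarrow> (\<integral>x. w x * Dq x $ i \<partial>lebesgue_on \<Omega>)"
      "(\<lambda>n. \<integral>x. Dw x * s n x \<partial>lebesgue_on \<Omega>) \<longlonglongrightarrow> (\<integral>x. Dw x * q x \<partial>lebesgue_on \<Omega>)"
    using w(4,5) s(2,3) unfolding L2_def
    by (auto intro!: tendsto_integral_bounded_mult[where B = B])
  have "(\<integral>x. w x * cgrad (s n) x $ i \<partial>lebesgue_on \<Omega>) = - (\<integral>x. Dw x * s n x \<partial>lebesgue_on \<Omega>)" for n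
    by (rule test_fun_integration_by_parts[OF \<Omega> s(1) w])
  then have "(\<lambda>n. \<integral>x. w x * cgrad (s n) x $ i \<partial>lebesgue_on \<Omega>)
      \<longlonglongrightarrow> - (\<integral>x. Dw x * q x \<partial>lebesgue_on \<Omega>)"
    using tendsto_minus[OF lim(2)] by simp
  then show ?thesis
    by (rule LIMSEQ_unique[OF lim(1)])
qed

section \<open>Estimates for solutions of the variational inequality\<close>

lemma zero_inK: "inK \<Omega> (\<lambda>x. 0) (\<lambda>x. 0)"
  unfolding inK_def H10_def H1_def L2_def test_fun_def
  by (auto intro!: exI[of _ "\<lambda>n x. 0"] simp: frechet_derivative_const cgrad_def)

lemma H10_integrable:
  assumes "open \<Omega>" "bounded \<Omega>" "H10 \<Omega> q Dq"
  shows "integrable (lebesgue_on \<Omega>) q" "integrable (lebesgue_on \<Omega>) (\<lambda>x. Dq x $ i)"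
proof -
  interpret finite_measure "lebesgue_on \<Omega>"
    using assms(1,2) by (rule finite_measure_lebesgue_on_bounded_open)
  show "integrable (lebesgue_on \<Omega>) q" "integrable (lebesgue_on \<Omega>) (\<lambda>x. Dq x $ i)"
    using assms(3) unfolding H10_def H1_def L2_def by (auto intro: square_integrable_imp_integrable)
qed

lemma H10_integral_le:
  assumes \<Omega>: "open \<Omega>" "bounded \<Omega>" and q: "H10 \<Omega> q Dq"
    and R: "\<And>x. x \<in> \<Omega> \<Longrightarrow> \<bar>x $ 1\<bar> \<le> R"
  shows "(\<integral>x. q x \<partial>lebesgue_on \<Omega>) \<le> R * (\<integral>x. \<bar>Dq x $ 1\<bar> \<partial>lebesgue_on \<Omega>)"
proof -
  have "(\<integral>x. x $ 1 * Dq x $ 1 \<partial>lebesgue_on \<Omega>) = - (\<integral>x. 1 * q x \<partial>lebesgue_on \<Omega>)"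
    by (rule H10_integration_by_parts[OF \<Omega> q, where B = "max R 1"])
      (use R in \<open>auto intro!: continuous_intros derivative_eq_intros simp: le_max_iff_disj\<close>)
  then have "(\<integral>x. q x \<partial>lebesgue_on \<Omega>) = - (\<integral>x. x $ 1 * Dq x $ 1 \<partial>lebesgue_on \<Omega>)"
    by simp
  also have "\<dots> \<le> (\<integral>x. \<bar>x $ 1 * Dq x $ 1\<bar> \<partial>lebesgue_on \<Omega>)"
    using integral_abs_bound[of "lebesgue_on \<Omega>" "\<lambda>x. x $ 1 * Dq x $ 1"] by linarith
  also have "\<dots> \<le> (\<integral>x. R * \<bar>Dq x $ 1\<bar> \<partial>lebesgue_on \<Omega>)"
  proof (rule integral_mono)
    have "integrable (lebesgue_on \<Omega>) (\<lambda>x. x $ 1 * Dq x $ 1)"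
      using H10_integrable[OF \<Omega> q] R \<Omega>(1)
      by (intro integrable_bounded_mult[where B = R])
        (auto intro!: continuous_imp_measurable_on_sets_lebesgue continuous_intros)
    then show "integrable (lebesgue_on \<Omega>) (\<lambda>x. \<bar>x $ 1 * Dq x $ 1\<bar>)"
      by simp
    show "integrable (lebesgue_on \<Omega>) (\<lambda>x. R * \<bar>Dq x $ 1\<bar>)"
      using H10_integrable[OF \<Omega> q] by simp
    show "\<bar>x $ 1 * Dq x $ 1\<bar> \<le> R * \<bar>Dq x $ 1\<bar>" if "x \<in> space (lebesgue_on \<Omega>)" for x
      using R[of x] that by (simp add: abs_mult mult_right_mono)
  qed
  finally show ?thesis
    by simp
qed

lemma H10_integral_abs_squared_le:
  assumes "open \<Omega>" "bounded \<Omega>" "H10 \<Omega> q Dq"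
  shows "(\<integral>x. \<bar>Dq x $ i\<bar> \<partial>lebesgue_on \<Omega>)\<^sup>2
    \<le> measure lebesgue \<Omega> * (\<integral>x. (Dq x $ i)\<^sup>2 \<partial>lebesgue_on \<Omega>)"
proof -
  interpret finite_measure "lebesgue_on \<Omega>"
    using assms(1,2) by (rule finite_measure_lebesgue_on_bounded_open)
  show ?thesis
    using integral_abs_squared_le assms unfolding H10_def H1_def L2_def
    by (auto simp: measure_restrict_space)
qed

lemma le_divide_of_quadratic_bound:
  fixes A Q H \<mu> b :: real
  assumes "0 < b" "0 \<le> H" "0 \<le> \<mu>" "b * Q \<le> H * A" "A\<^sup>2 \<le> \<mu> * Q"
  shows "A \<le> \<mu> * H / b"
proof (cases "A > 0")
  case True
  have "(b * A) * A \<le> b * (\<mu> * Q)"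
    using assms(1,5) by (simp add: power2_eq_square mult.assoc)
  also have "\<dots> = \<mu> * (b * Q)"
    by simp
  also have "\<dots> \<le> \<mu> * (H * A)"
    using assms(3,4) by (rule mult_left_mono[rotated])
  finally have "b * A \<le> \<mu> * H"
    using True by (simp add: mult.assoc mult.commute)
  then show ?thesis
    using assms(1) by (simp add: pos_le_divide_eq mult.commute)
next
  case False
  then show ?thesis
    using assms(1-3) by (smt (verit) divide_nonneg_pos mult_nonneg_nonneg)
qed

text \<open>Test the variational inequality with \<phi> = 0 and drop the h0 and second-component parts of
  the energy.\<close>
lemma solves_VI_energy_estimate:
  fixes h0 :: "pt \<Rightarrow> real"
  assumes \<Omega>: "open \<Omega>" "bounded \<Omega>" and sol: "solves_VI \<Omega> h0 \<beta> \<gamma> q Dq" and "\<beta> > 0"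
    and h0: "h0 \<in> borel_measurable (lebesgue_on \<Omega>)"
      "\<And>x. x \<in> \<Omega> \<Longrightarrow> 0 \<le> h0 x" "\<And>x. x \<in> \<Omega> \<Longrightarrow> h0 x \<le> H"
  shows "\<beta>^3 * (\<integral>x. (Dq x $ 1)\<^sup>2 \<partial>lebesgue_on \<Omega>) + \<gamma> * (\<integral>x. q x \<partial>lebesgue_on \<Omega>)
    \<le> (\<integral>x. h0 x * Dq x $ 1 \<partial>lebesgue_on \<Omega>)"
proof -
  define a where "a x = (h0 x + \<beta>)^3" for x
  define E where "E = (\<integral>x. a x * ((Dq x $ 1)\<^sup>2 + (Dq x $ 2)\<^sup>2) \<partial>lebesgue_on \<Omega>)"
  have L: "L2 \<Omega> (\<lambda>x. Dq x $ 1)" "L2 \<Omega> (\<lambda>x. Dq x $ 2)"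
    using sol unfolding solves_VI_def inK_def H10_def H1_def by auto
  have "(\<integral>x. a x * (Dq x \<bullet> (0 - Dq x)) \<partial>lebesgue_on \<Omega>)
      \<ge> (\<integral>x. h0 x * (0 - Dq x $ 1) \<partial>lebesgue_on \<Omega>) - \<gamma> * (\<integral>x. 0 - q x \<partial>lebesgue_on \<Omega>)"
    using sol zero_inK[of \<Omega>] unfolding solves_VI_def a_def by fastforce
  moreover have "(\<integral>x. a x * (Dq x \<bullet> (0 - Dq x)) \<partial>lebesgue_on \<Omega>)
      = (\<integral>x. - (a x * ((Dq x $ 1)\<^sup>2 + (Dq x $ 2)\<^sup>2)) \<partial>lebesgue_on \<Omega>)"
    by (intro Bochner_Integration.integral_cong refl)
      (simp add: inner_vec_def sum_2 power2_eq_square algebra_simps)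
  ultimately have "E + \<gamma> * (\<integral>x. q x \<partial>lebesgue_on \<Omega>) \<le> (\<integral>x. h0 x * Dq x $ 1 \<partial>lebesgue_on \<Omega>)"
    unfolding E_def by simp
  moreover have "\<beta>^3 * (\<integral>x. (Dq x $ 1)\<^sup>2 \<partial>lebesgue_on \<Omega>) \<le> E"
  proof -
    have a: "\<beta>^3 \<le> a x" "0 \<le> a x" "\<bar>a x\<bar> \<le> (H + \<beta>)^3" if "x \<in> \<Omega>" for x
      using h0(2,3)[OF that] \<open>\<beta> > 0\<close> unfolding a_def by (auto intro: power_mono)
    have "integrable (lebesgue_on \<Omega>) (\<lambda>x. a x * ((Dq x $ 1)\<^sup>2 + (Dq x $ 2)\<^sup>2))"
      using L h0(1) a(3) unfolding L2_def a_def
      by (intro integrable_bounded_mult[where B = "(H + \<beta>)^3"]) auto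
    then have "(\<integral>x. \<beta>^3 * (Dq x $ 1)\<^sup>2 \<partial>lebesgue_on \<Omega>) \<le> E"
      unfolding E_def using L(1) a(1,2) \<open>\<beta> > 0\<close> unfolding L2_def
      by (intro integral_mono) (auto intro!: mult_mono)
    then show ?thesis
      by simp
  qed
  ultimately show ?thesis
    by simp
qed

lemma solves_VI_integral_le:
  fixes h0 :: "pt \<Rightarrow> real"
  assumes \<Omega>: "open \<Omega>" "bounded \<Omega>" and sol: "solves_VI \<Omega> h0 \<beta> \<gamma> q Dq"
    and "\<beta> > 0" "\<gamma> \<ge> 0" and "0 \<le> H" "0 \<le> R"
    and h0: "h0 \<in> borel_measurable (lebesgue_on \<Omega>)"
      "\<And>x. x \<in> \<Omega> \<Longrightarrow> 0 \<le> h0 x" "\<And>x. x \<in> \<Omega> \<Longrightarrow> h0 x \<le> H"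
    and R: "\<And>x. x \<in> \<Omega> \<Longrightarrow> \<bar>x $ 1\<bar> \<le> R"
  shows "(\<integral>x. q x \<partial>lebesgue_on \<Omega>) \<le> R * measure lebesgue \<Omega> * H / \<beta>^3"
proof -
  define I where "I = (\<integral>x. q x \<partial>lebesgue_on \<Omega>)"
  define A where "A = (\<integral>x. \<bar>Dq x $ 1\<bar> \<partial>lebesgue_on \<Omega>)"
  define Q where "Q = (\<integral>x. (Dq x $ 1)\<^sup>2 \<partial>lebesgue_on \<Omega>)"
  define \<mu> where "\<mu> = measure lebesgue \<Omega>"
  have q: "H10 \<Omega> q Dq" "AE x in lebesgue_on \<Omega>. 0 \<le> q x"
    using sol unfolding solves_VI_def inK_def by blast+
  have "\<beta>^3 * Q + \<gamma> * I \<le> (\<integral>x. h0 x * Dq x $ 1 \<partial>lebesgue_on \<Omega>)"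
    unfolding Q_def I_def by (rule solves_VI_energy_estimate[OF \<Omega> sol \<open>\<beta> > 0\<close> h0])
  also have "\<dots> \<le> (\<integral>x. H * \<bar>Dq x $ 1\<bar> \<partial>lebesgue_on \<Omega>)"
  proof (rule integral_mono)
    show "integrable (lebesgue_on \<Omega>) (\<lambda>x. h0 x * Dq x $ 1)"
      using H10_integrable[OF \<Omega> q(1)] h0 by (intro integrable_bounded_mult[where B = H]) auto
    show "integrable (lebesgue_on \<Omega>) (\<lambda>x. H * \<bar>Dq x $ 1\<bar>)"
      using H10_integrable[OF \<Omega> q(1)] by simp
    show "h0 x * Dq x $ 1 \<le> H * \<bar>Dq x $ 1\<bar>" if "x \<in> space (lebesgue_on \<Omega>)" for x
      using h0(2,3)[of x] that mult_right_mono[of "h0 x" H "\<bar>Dq x $ 1\<bar>"] abs_ge_self[of "Dq x $ 1"]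
        mult_left_mono[of "Dq x $ 1" "\<bar>Dq x $ 1\<bar>" "h0 x"] by simp
  qed
  finally have "\<beta>^3 * Q + \<gamma> * I \<le> H * A"
    unfolding A_def by simp
  moreover have "0 \<le> \<gamma> * I"
    using \<open>\<gamma> \<ge> 0\<close> integral_nonneg_AE[OF q(2)] unfolding I_def by simp
  ultimately have "\<beta>^3 * Q \<le> H * A"
    by linarith
  moreover have "A\<^sup>2 \<le> \<mu> * Q"
    unfolding A_def Q_def \<mu>_def by (rule H10_integral_abs_squared_le[OF \<Omega> q(1)])
  ultimately have "A \<le> \<mu> * H / \<beta>^3"
    using \<open>\<beta> > 0\<close> \<open>0 \<le> H\<close> unfolding \<mu>_def by (intro le_divide_of_quadratic_bound) auto
  then have "R * A \<le> R * (\<mu> * H / \<beta>^3)"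
    using \<open>0 \<le> R\<close> by (rule mult_left_mono)
  moreover have "I \<le> R * A"
    unfolding I_def A_def by (rule H10_integral_le[OF \<Omega> q(1) R])
  ultimately show ?thesis
    unfolding I_def \<mu>_def by simp
qed

lemma solves_VI_integral_eq_0:
  fixes h0 :: "pt \<Rightarrow> real" and D :: "pt \<Rightarrow> pt"
  assumes \<Omega>: "open \<Omega>" "bounded \<Omega>" and sol: "solves_VI \<Omega> h0 \<beta> \<gamma> q Dq" and "\<beta> > 0"
    and h0: "\<And>x. x \<in> \<Omega> \<Longrightarrow> (h0 has_derivative (\<lambda>v. D x \<bullet> v)) (at x)" "continuous_on \<Omega> D"
      "\<And>x. x \<in> \<Omega> \<Longrightarrow> 0 \<le> h0 x" "\<And>x. x \<in> \<Omega> \<Longrightarrow> h0 x \<le> H" "\<And>x. x \<in> \<Omega> \<Longrightarrow> \<bar>D x $ 1\<bar> \<le> H"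
    and \<gamma>: "\<And>x. x \<in> \<Omega> \<Longrightarrow> 0 \<le> \<gamma> + D x $ 1"
  shows "(\<integral>x. q x \<partial>lebesgue_on \<Omega>) = 0"
proof -
  define I where "I = (\<integral>x. q x \<partial>lebesgue_on \<Omega>)"
  define A where "A = (\<integral>x. \<bar>Dq x $ 1\<bar> \<partial>lebesgue_on \<Omega>)"
  define Q where "Q = (\<integral>x. (Dq x $ 1)\<^sup>2 \<partial>lebesgue_on \<Omega>)"
  have q: "H10 \<Omega> q Dq" "AE x in lebesgue_on \<Omega>. 0 \<le> q x"
    using sol unfolding solves_VI_def inK_def by blast+
  have h0_cont: "continuous_on \<Omega> h0"
    using h0(1) by (intro continuous_at_imp_continuous_on) (auto dest: has_derivative_continuous)
  have D1_meas: "(\<lambda>x. D x $ 1) \<in> borel_measurable (lebesgue_on \<Omega>)"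
    using h0(2) \<Omega>(1) by (intro continuous_imp_measurable_on_sets_lebesgue continuous_intros) auto
  have Dq_int: "integrable (lebesgue_on \<Omega>) (\<lambda>x. D x $ 1 * q x)"
    using H10_integrable[OF \<Omega> q(1)] D1_meas h0(5) by (intro integrable_bounded_mult[where B = H]) auto
  have "\<beta>^3 * Q + \<gamma> * I \<le> (\<integral>x. h0 x * Dq x $ 1 \<partial>lebesgue_on \<Omega>)"
    unfolding Q_def I_def using h0_cont \<Omega>(1) h0(3,4)
    by (intro solves_VI_energy_estimate[OF \<Omega> sol \<open>\<beta> > 0\<close>] continuous_imp_measurable_on_sets_lebesgue)
      auto
  also have "\<dots> = - (\<integral>x. D x $ 1 * q x \<partial>lebesgue_on \<Omega>)"
  proof (rule H10_integration_by_parts[OF \<Omega> q(1) h0_cont, where B = H])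
    show "continuous_on \<Omega> (\<lambda>x. D x $ 1)"
      using h0(2) by (intro continuous_intros)
    show "((\<lambda>t. h0 (x + t *\<^sub>R axis 1 1)) has_real_derivative D x $ 1) (at 0)" if "x \<in> \<Omega>" for x
      using has_derivative_imp_directional[OF h0(1)[OF that], of "axis 1 1"] by (simp add: inner_axis)
  qed (use h0(3,4,5) in auto)
  finally have "\<beta>^3 * Q \<le> - (\<integral>x. (\<gamma> + D x $ 1) * q x \<partial>lebesgue_on \<Omega>)"
    using H10_integrable[OF \<Omega> q(1)] Dq_int unfolding I_def
    by (simp add: distrib_right Bochner_Integration.integral_add)
  also have "\<dots> \<le> 0"
    using q(2) \<gamma> by (simp, intro integral_nonneg_AE) (auto elim!: AE_mp)
  finally have "Q = 0"
    using \<open>\<beta> > 0\<close> unfolding Q_def by (simp add: mult_le_0_iff antisym)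
  moreover have "A\<^sup>2 \<le> measure lebesgue \<Omega> * Q"
    unfolding A_def Q_def by (rule H10_integral_abs_squared_le[OF \<Omega> q(1)])
  ultimately have "A = 0"
    by simp
  obtain R where "\<And>x. x \<in> \<Omega> \<Longrightarrow> \<bar>x $ 1\<bar> \<le> R"
    using \<Omega>(2) by (meson bounded_pos component_le_norm_cart order_trans)
  then have "I \<le> 0"
    using H10_integral_le[OF \<Omega> q(1)] \<open>A = 0\<close> unfolding I_def A_def by auto
  then show ?thesis
    using integral_nonneg_AE[OF q(2)] unfolding I_def by simp
qed

lemma pderiv_eq_gradient:
  assumes "(f has_derivative (\<lambda>v. D \<bullet> v)) (at x)"
  shows "pderiv i f x = D $ i"
  using frechet_derivative_at[OF assms, symmetric] by (simp add: pderiv_def inner_axis)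

lemma C1_closure_bounded:
  assumes "C1_closure \<Omega> h" "bounded \<Omega>"
  obtains D H where "\<And>x. x \<in> \<Omega> \<Longrightarrow> (h has_derivative (\<lambda>v. D x \<bullet> v)) (at x)"
    "continuous_on \<Omega> D" "\<And>x. x \<in> \<Omega> \<Longrightarrow> \<bar>h x\<bar> \<le> H" "\<And>x. x \<in> \<Omega> \<Longrightarrow> \<bar>D x $ i\<bar> \<le> H"
proof -
  obtain D where h: "continuous_on (closure \<Omega>) h" and D: "continuous_on (closure \<Omega>) D"
    and deriv: "\<And>x. x \<in> \<Omega> \<Longrightarrow> (h has_derivative (\<lambda>v. D x \<bullet> v)) (at x)"
    using assms(1) unfolding C1_closure_def by blast
  have "compact (closure \<Omega>)"
    using assms(2) by (simp add: compact_closure)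
  then obtain Hh HD where "\<And>x. x \<in> closure \<Omega> \<Longrightarrow> norm (h x) \<le> Hh"
      "\<And>x. x \<in> closure \<Omega> \<Longrightarrow> norm (D x) \<le> HD"
    using compact_continuous_image[OF h] compact_continuous_image[OF D]
    by (metis compact_imp_bounded bounded_iff imageI)
  then have "\<bar>h x\<bar> \<le> max Hh HD" "\<bar>D x $ i\<bar> \<le> max Hh HD" if "x \<in> \<Omega>" for x
    using that closure_subset[of \<Omega>] component_le_norm_cart[of "D x" i]
    by (fastforce simp: le_max_iff_disj)+
  moreover have "continuous_on \<Omega> D"
    using D closure_subset by (rule continuous_on_subset)
  ultimately show thesis
    using deriv that by blast
qed

lemma SUP_neg_pderiv_le_imp_nonneg:
  assumes deriv: "\<And>x. x \<in> \<Omega> \<Longrightarrow> (h has_derivative (\<lambda>v. D x \<bullet> v)) (at x)"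
    and bound: "\<And>x. x \<in> \<Omega> \<Longrightarrow> \<bar>D x $ 1\<bar> \<le> H"
    and "(SUP x\<in>\<Omega>. - pderiv 1 h x) \<le> \<gamma>" "x \<in> \<Omega>"
  shows "0 \<le> \<gamma> + D x $ 1"
proof -
  have "- pderiv 1 h y \<le> H" if "y \<in> \<Omega>" for y
    using bound[OF that] unfolding pderiv_eq_gradient[OF deriv[OF that]] by (simp add: abs_le_iff)
  then have "bdd_above ((\<lambda>x. - pderiv 1 h x) ` \<Omega>)"
    by (rule bdd_aboveI2)
  then have "- pderiv 1 h x \<le> (SUP x\<in>\<Omega>. - pderiv 1 h x)"
    by (rule cSUP_upper[OF \<open>x \<in> \<Omega>\<close>])
  then show ?thesis
    using assms(3) pderiv_eq_gradient[OF deriv[OF \<open>x \<in> \<Omega>\<close>], of 1] by linarith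
qed

theorem lemma3p1:
  fixes \<Omega> :: "pt set" and h0 :: "pt \<Rightarrow> real" and F :: real
  assumes "open \<Omega>" and "bounded \<Omega>" and "regular_boundary \<Omega>" and "0 \<in> \<Omega>"
    and "C1_closure \<Omega> h0" and "\<forall>x\<in>closure \<Omega>. h0 x \<ge> 0" and "h0 0 = 0"
    and "F > 0"
  shows "(\<exists>c1>0. \<forall>\<beta>>0. \<forall>\<gamma>\<ge>0. \<forall>q Dq. solves_VI \<Omega> h0 \<beta> \<gamma> q Dq \<longrightarrow>
            Gfun \<Omega> F q \<le> c1 / \<beta>^3 - F)
       \<and> (\<forall>\<beta>>0. \<forall>\<gamma>. \<gamma> \<ge> (SUP x\<in>\<Omega>. - pderiv 1 h0 x) \<longrightarrow> (\<forall>q Dq. solves_VI \<Omega> h0 \<beta> \<gamma> q Dq \<longrightarrow>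
            Gfun \<Omega> F q = - F))"
proof
  note \<Omega> = assms(1,2)
  obtain D H where D: "\<And>x. x \<in> \<Omega> \<Longrightarrow> (h0 has_derivative (\<lambda>v. D x \<bullet> v)) (at x)"
      "continuous_on \<Omega> D" "\<And>x. x \<in> \<Omega> \<Longrightarrow> \<bar>h0 x\<bar> \<le> H" "\<And>x. x \<in> \<Omega> \<Longrightarrow> \<bar>D x $ 1\<bar> \<le> H"
    using C1_closure_bounded[OF assms(5,2)] by blast
  have h0: "\<And>x. x \<in> \<Omega> \<Longrightarrow> 0 \<le> h0 x" "\<And>x. x \<in> \<Omega> \<Longrightarrow> h0 x \<le> H"
    using assms(6) closure_subset D(3) by (force simp: abs_le_iff)+
  have "0 \<le> H"
    using D(3) assms(4) by fastforce
  obtain R where R: "0 \<le> R" "\<And>x. x \<in> \<Omega> \<Longrightarrow> \<bar>x $ 1\<bar> \<le> R"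
    using \<Omega>(2) by (meson bounded_pos component_le_norm_cart less_imp_le order_trans)
  have h0_meas: "h0 \<in> borel_measurable (lebesgue_on \<Omega>)"
    using D(1) \<Omega>(1) by (intro continuous_imp_measurable_on_sets_lebesgue continuous_at_imp_continuous_on)
      (auto dest: has_derivative_continuous)
  define c1 where "c1 = R * measure lebesgue \<Omega> * H + 1"
  have "R * measure lebesgue \<Omega> * H / \<beta>^3 \<le> c1 / \<beta>^3" if "\<beta> > 0" for \<beta> :: real
    using that unfolding c1_def by (simp add: divide_right_mono)
  moreover have "c1 > 0"
    unfolding c1_def using R(1) \<open>0 \<le> H\<close> by (simp add: add_nonneg_pos)
  ultimately show "\<exists>c1>0. \<forall>\<beta>>0. \<forall>\<gamma>\<ge>0. \<forall>q Dq. solves_VI \<Omega> h0 \<beta> \<gamma> q Dq \<longrightarrow>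
      Gfun \<Omega> F q \<le> c1 / \<beta>^3 - F"
    unfolding Gfun_def
    using solves_VI_integral_le[OF \<Omega> _ _ _ \<open>0 \<le> H\<close> R(1) h0_meas h0 R(2)] by (meson diff_right_mono order_trans)
  show "\<forall>\<beta>>0. \<forall>\<gamma>. \<gamma> \<ge> (SUP x\<in>\<Omega>. - pderiv 1 h0 x) \<longrightarrow> (\<forall>q Dq. solves_VI \<Omega> h0 \<beta> \<gamma> q Dq \<longrightarrow>
      Gfun \<Omega> F q = - F)"
    unfolding Gfun_def using solves_VI_integral_eq_0[OF \<Omega> _ _ D(1,2) h0 D(4)]
      SUP_neg_pderiv_le_imp_nonneg[OF D(1,4)] by auto
qed

end
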